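(* For every $n\ge 2$, the Bigalke–Rollenske nilmanifold $X^{4n-2}$ admits balanced metrics.
   Context: Fix $n\ge2$. Let $G_n\subset GL(2n+2,\mathbb C)$ be the real nilpotent Lie group of upper triangular unipotent matrices parametrized by $x_1,\dots,x_{n-1},y_1,\dots,y_n,z_1,\dots,z_{n-1},w_1,\dots,w_n\in\mathbb C$ of the following shape (rows/columns indexed $1,\dots,2n+2$): row $1$ has entry $\bar y_1$ in column $2n+1$ and $w_1$ in column $2n+2$; for $k=2,\dots,n$, row $k$ has $\bar z_{k-1}$ in column $n+k-1$, $-x_{k-1}$ in column $n+k$ and $w_k$ in column $2n+2$; for $k=1,\dots,n$, row $n+k$ has $y_k$ in column $2n+2$; row $2n+1$ has $z_1$ in column $2n+2$; all other off-diagonal entries are $0$ and the diagonal entries are $1$. Let $\Gamma$ be the lattice of such matrices with entries in $\mathbb Z[i]$, and $X^{4n-2}=\Gamma\backslash G_n$, a compact complex manifold of complex dimension $4n-2$ with the left-invariant complex structure whose $(1,0)$-forms are spanned by the left-invariant co-frame $dx_j\,(1\le j\le n-1)$, $dy_j\,(1\le j\le n)$, $dz_j\,(1\le j\le n-1)$, $\omega_1=dw_1-\bar y_1dz_1$, $\omega_k=dw_k-\bar z_{k-1}dy_{k-1}+x_{k-1}dy_k$ $(k=2,\dots,n)$. These satisfy $d(dx_j)=d(dy_j)=d(dz_j)=0$, $\partial\omega_1=0$, $\bar\partial\omega_1=dz_1\wedge d\bar y_1$, and for $j=2,\dots,n$: $\partial\omega_j=dx_{j-1}\wedge dy_j$,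 $\bar\partial\omega_j=dy_{j-1}\wedge d\bar z_{j-1}$. A balanced metric on a complex manifold of complex dimension $N$ is a Hermitian metric whose fundamental form $\omega$ satisfies $d\omega^{N-1}=0$. *)

theory Defs
  imports Complex_Main
begin

text \<open>
  Left-invariant calculus on the nilmanifold X^{4n-2} = Gamma\G_n, modelled on the
  complexified dual of the Lie algebra.
  Basis of complex 1-forms: indices 0..N-1 are the (1,0)-forms of the given co-frame,
  index k+N is the conjugate of index k.  Layout of the (1,0)-coframe:
    dx_j (j=1..n-1)  at index j-1,
    dy_j (j=1..n)    at index n-2+j,
    dz_j (j=1..n-1)  at index 2n-2+j,
    omega_j (j=1..n) at index 3n-3+j.
  A (left-invariant, complex valued) form is a function assigning to every finite
  set I of indices the coefficient of e_I = e_{i1} ^ ... ^ e_{ik} (i1 < ... < ik).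
\<close>

type_synonym form = "nat set \<Rightarrow> complex"

definition cdim :: "nat \<Rightarrow> nat" where "cdim n = 4 * n - 2"

definition ix :: "nat \<Rightarrow> nat \<Rightarrow> nat" where "ix n j = j - 1"
definition iy :: "nat \<Rightarrow> nat \<Rightarrow> nat" where "iy n j = n - 2 + j"
definition iz :: "nat \<Rightarrow> nat \<Rightarrow> nat" where "iz n j = 2 * n - 2 + j"
definition iw :: "nat \<Rightarrow> nat \<Rightarrow> nat" where "iw n j = 3 * n - 3 + j"
definition bar :: "nat \<Rightarrow> nat \<Rightarrow> nat" where "bar n k = k + cdim n"

definition fzero :: form where "fzero = (\<lambda>_. 0)"
definition fadd :: "form \<Rightarrow> form \<Rightarrow> form" where "fadd a b = (\<lambda>K. a K + b K)"
definition mono :: "nat set \<Rightarrow> form" where "mono I = (\<lambda>K. if K = I then 1 else 0)"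
definition e1 :: "nat \<Rightarrow> form" where "e1 k = mono {k}"

text \<open>sign of e_I ^ e_J = sign * e_{I \<union> J} for disjoint I, J\<close>
definition wsign :: "nat set \<Rightarrow> nat set \<Rightarrow> complex" where
  "wsign I J = (-1) ^ card {(i, j). i \<in> I \<and> j \<in> J \<and> j < i}"

definition wedge :: "form \<Rightarrow> form \<Rightarrow> form" where
  "wedge a b = (\<lambda>K. \<Sum>I\<in>Pow K. a I * b (K - I) * wsign I (K - I))"

definition fpow :: "form \<Rightarrow> nat \<Rightarrow> form" where
  "fpow a k = (wedge a ^^ k) (mono {})"

text \<open>Differentials of the basis 1-forms (structure equations, d = \<partial> + \<partial>bar):
  d dx_j = d dy_j = d dz_j = 0, d omega_1 = dz_1 ^ d(ybar_1),
  d omega_j = dx_{j-1} ^ dy_j + dy_{j-1} ^ d(zbar_{j-1}) for j = 2..n,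
  and the complex conjugate equations for the conjugate forms.\<close>
definition dgen :: "nat \<Rightarrow> nat \<Rightarrow> form" where
  "dgen n k =
    (if k = iw n 1 then wedge (e1 (iz n 1)) (e1 (bar n (iy n 1)))
     else if iw n 2 \<le> k \<and> k \<le> iw n n then
       (let j = k - (3 * n - 3) in
          fadd (wedge (e1 (ix n (j - 1))) (e1 (iy n j)))
               (wedge (e1 (iy n (j - 1))) (e1 (bar n (iz n (j - 1))))))
     else if k = bar n (iw n 1) then wedge (e1 (bar n (iz n 1))) (e1 (iy n 1))
     else if bar n (iw n 2) \<le> k \<and> k \<le> bar n (iw n n) then
       (let j = k - cdim n - (3 * n - 3) in
          fadd (wedge (e1 (bar n (ix n (j - 1)))) (e1 (bar n (iy n j))))
               (wedge (e1 (bar n (iy n (j - 1)))) (e1 (iz n (j - 1)))))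
     else fzero)"

definition dmono :: "nat \<Rightarrow> nat set \<Rightarrow> form" where
  "dmono n I = (\<lambda>K. \<Sum>t\<in>I. (-1) ^ card {s\<in>I. s < t} *
       wedge (mono {s\<in>I. s < t}) (wedge (dgen n t) (mono {s\<in>I. t < s})) K)"

definition dform :: "nat \<Rightarrow> form \<Rightarrow> form" where
  "dform n a = (\<lambda>K. \<Sum>I\<in>Pow {..<2 * cdim n}. a I * dmono n I K)"

definition herm_pos_def :: "nat \<Rightarrow> (nat \<Rightarrow> nat \<Rightarrow> complex) \<Rightarrow> bool" where
  "herm_pos_def N h \<longleftrightarrow>
     (\<forall>j<N. \<forall>k<N. h k j = cnj (h j k)) \<and>
     (\<forall>v::nat \<Rightarrow> complex. (\<exists>j<N. v j \<noteq> 0) \<longrightarrow>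
        0 < Re (\<Sum>j<N. \<Sum>k<N. cnj (v j) * h j k * v k))"

definition fundamental_form :: "nat \<Rightarrow> (nat \<Rightarrow> nat \<Rightarrow> complex) \<Rightarrow> form" where
  "fundamental_form n h =
     (\<lambda>K. \<Sum>j<cdim n. \<Sum>k<cdim n. \<i> * h j k * wedge (e1 j) (e1 (bar n k)) K)"

text \<open>A left-invariant Hermitian metric (given by h in the co-frame) is balanced iff
  d(omega^(N-1)) = 0.\<close>
definition balanced_inv_metric :: "nat \<Rightarrow> (nat \<Rightarrow> nat \<Rightarrow> complex) \<Rightarrow> bool" where
  "balanced_inv_metric n h \<longleftrightarrow>
     herm_pos_def (cdim n) h \<and>
     dform n (fpow (fundamental_form n h) (cdim n - 1)) = fzero"

end

theory Submission
  imports Defs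
begin

text \<open>
  Take the diagonal metric, omega = i sum_j e_j ^ conj(e_j). Then omega^(N-1) is a combination
  of monomials e_I whose index set I is closed under conjugation and misses exactly one
  conjugate pair {j, conj j}. Differentiating a factor e_t of such a monomial replaces it by a
  2-form e_a ^ e_b from the structure equations, and the product survives only if a, b are not
  in I, i.e. {a, b} = {j, conj j}. But no structure equation contains a term e_j ^ conj(e_j)
  (nor the form e_t itself), so d(omega^(N-1)) = 0.
\<close>

lemma wedge_nonzeroD:
  assumes "wedge a b K \<noteq> 0"
  obtains I where "I \<subseteq> K" "a I \<noteq> 0" "b (K - I) \<noteq> 0"
proof -
  obtain I where "I \<in> Pow K" "a I * b (K - I) * wsign I (K - I) \<noteq> 0"
    using assms unfolding wedge_def by (meson sum.neutral)
  then show thesis using that by simp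
qed

lemma mono_nonzeroD: "mono A I \<noteq> 0 \<Longrightarrow> I = A"
  by (simp add: mono_def split: if_splits)

lemma wedge_e1_nonzeroD:
  assumes "wedge (e1 a) (e1 b) L \<noteq> 0"
  shows "L = {a, b} \<and> a \<noteq> b"
proof -
  obtain I where "I \<subseteq> L" "e1 a I \<noteq> 0" "e1 b (L - I) \<noteq> 0"
    using assms by (rule wedge_nonzeroD)
  then have "I = {a}" "L - I = {b}" unfolding e1_def by (auto dest: mono_nonzeroD)
  with \<open>I \<subseteq> L\<close> show ?thesis by auto
qed

lemma wedge_mono_mono_nonzeroD:
  assumes "wedge (mono A) (wedge a (mono B)) K \<noteq> 0"
  obtains L where "a L \<noteq> 0" "L \<inter> A = {}" "L \<inter> B = {}"
proof -
  obtain I where I: "I \<subseteq> K" "mono A I \<noteq> 0" "wedge a (mono B) (K - I) \<noteq> 0"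
    using assms by (rule wedge_nonzeroD)
  obtain L where L: "L \<subseteq> K - I" "a L \<noteq> 0" "mono B (K - I - L) \<noteq> 0"
    using I(3) by (rule wedge_nonzeroD)
  have "I = A" "K - I - L = B" using I(2) L(3) by (auto dest: mono_nonzeroD)
  with L(1,2) show thesis using that by blast
qed

lemma add_nonzero_disjE:
  assumes "(x::'a::comm_monoid_add) + y \<noteq> 0"
  obtains "x \<noteq> 0" | "y \<noteq> 0"
  using assms by (cases "x = 0") simp_all

definition conj_pair :: "nat \<Rightarrow> nat \<Rightarrow> nat \<Rightarrow> bool" where
  "conj_pair N a b \<longleftrightarrow> b = a + N \<or> a = b + N"

definition nonconj_pair_avoiding :: "nat \<Rightarrow> nat \<Rightarrow> nat set \<Rightarrow> bool" where
  "nonconj_pair_avoiding N t L \<longleftrightarrow>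
     (\<exists>a b. L = {a, b} \<and> a \<noteq> b \<and> a < 2 * N \<and> b < 2 * N \<and> \<not> conj_pair N a b) \<and> t \<notin> L"

lemma nonconj_pair_avoidingI:
  assumes "wedge (e1 a) (e1 b) L \<noteq> 0" "a < 2 * N" "b < 2 * N" "a \<noteq> t" "b \<noteq> t"
    "\<not> conj_pair N a b"
  shows "nonconj_pair_avoiding N t L"
  using assms wedge_e1_nonzeroD unfolding nonconj_pair_avoiding_def by blast

lemma dgen_nonzeroD:
  assumes "2 \<le> n" "dgen n t L \<noteq> 0"
  shows "nonconj_pair_avoiding (cdim n) t L"
  using assms unfolding dgen_def Let_def fadd_def fzero_def
  apply (simp only: if_distribR simp_thms split: if_split_asm)
  subgoal by (erule nonconj_pair_avoidingI) (auto simp: conj_pair_def cdim_def iy_def iz_def iw_def bar_def)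
  subgoal by (elim add_nonzero_disjE; erule nonconj_pair_avoidingI)
      (auto simp: conj_pair_def cdim_def ix_def iy_def iz_def iw_def bar_def)
  subgoal by (erule nonconj_pair_avoidingI) (auto simp: conj_pair_def cdim_def iy_def iz_def iw_def bar_def)
  subgoal by (elim add_nonzero_disjE; erule nonconj_pair_avoidingI)
      (auto simp: conj_pair_def cdim_def ix_def iy_def iz_def iw_def bar_def)
  done

lemma dmono_nonzeroD:
  assumes "dmono n I K \<noteq> 0"
  obtains t L where "t \<in> I" "dgen n t L \<noteq> 0" "L \<inter> I \<subseteq> {t}"
proof -
  obtain t where t: "t \<in> I"
    "wedge (mono {s\<in>I. s < t}) (wedge (dgen n t) (mono {s\<in>I. t < s})) K \<noteq> 0"
    using assms unfolding dmono_def by (metis (no_types, lifting) mult_zero_right sum.neutral)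
  obtain L where "dgen n t L \<noteq> 0" "L \<inter> {s\<in>I. s < t} = {}" "L \<inter> {s\<in>I. t < s} = {}"
    using t(2) by (rule wedge_mono_mono_nonzeroD)
  moreover from this(2,3) have "L \<inter> I \<subseteq> {t}"
    using linorder_neqE_nat by blast
  ultimately show thesis using that t(1) by blast
qed

definition conj_closed :: "nat \<Rightarrow> nat set \<Rightarrow> bool" where
  "conj_closed N L \<longleftrightarrow> L \<subseteq> {..<2 * N} \<and> (\<forall>j<N. j \<in> L \<longleftrightarrow> j + N \<in> L)"

lemma conj_closed_empty: "conj_closed N {}"
  by (simp add: conj_closed_def)

lemma conj_closed_conj_pair: "j < N \<Longrightarrow> conj_closed N {j, j + N}"
  by (auto simp: conj_closed_def)

lemma conj_closed_Un: "conj_closed N A \<Longrightarrow> conj_closed N B \<Longrightarrow> conj_closed N (A \<union> B)"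
  by (auto simp: conj_closed_def)

lemma fpow_nonzeroD:
  assumes pairs: "\<And>L. a L \<noteq> 0 \<Longrightarrow> \<exists>j<N. L = {j, j + N}"
    and "fpow a m L \<noteq> 0"
  shows "conj_closed N L \<and> card L = 2 * m"
  using assms(2)
proof (induction m arbitrary: L)
  case 0
  then show ?case by (simp add: fpow_def mono_def conj_closed_empty split: if_splits)
next
  case (Suc m)
  obtain I where I: "I \<subseteq> L" "a I \<noteq> 0" "fpow a m (L - I) \<noteq> 0"
    using Suc.prems by (auto simp: fpow_def elim: wedge_nonzeroD)
  obtain j where j: "j < N" "I = {j, j + N}"
    using pairs[OF I(2)] by blast
  have IH: "conj_closed N (L - I)" "card (L - I) = 2 * m"
    using Suc.IH[OF I(3)] by auto
  have L: "L = I \<union> (L - I)"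
    using I(1) by blast
  have "conj_closed N L"
    using L conj_closed_Un[OF conj_closed_conj_pair[OF j(1)] IH(1)] j(2) by simp
  moreover have "finite (L - I)"
    using IH(1) unfolding conj_closed_def by (blast intro: finite_subset)
  then have "card (I \<union> (L - I)) = card I + card (L - I)"
    using j(2) by (intro card_Un_disjoint) auto
  then have "card L = card I + card (L - I)"
    by (simp only: L[symmetric])
  ultimately show ?case
    using IH(2) j by simp
qed

lemma fundamental_form_diagonal_nonzeroD:
  assumes diag: "\<And>j k. j \<noteq> k \<Longrightarrow> h j k = 0"
    and "fundamental_form n h L \<noteq> 0"
  shows "\<exists>j<cdim n. L = {j, j + cdim n}"
proof -
  obtain j k where jk: "j < cdim n" "k < cdim n" "\<i> * h j k * wedge (e1 j) (e1 (bar n k)) L \<noteq> 0"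
    using assms(2) unfolding fundamental_form_def by (meson lessThan_iff sum.neutral)
  then have "j = k" "L = {j, bar n k}"
    using diag wedge_e1_nonzeroD by fastforce+
  with jk(1) show ?thesis by (auto simp: bar_def)
qed

lemma conj_pair_outside_conj_closed:
  assumes I: "conj_closed N I" "card I = 2 * (N - 1)"
    and ab: "a \<notin> I" "b \<notin> I" "a \<noteq> b" "a < 2 * N" "b < 2 * N"
  shows "conj_pair N a b"
proof -
  define C where "C = {..<2 * N} - I"
  have closed: "I \<subseteq> {..<2 * N}" "\<And>j. j < N \<Longrightarrow> j \<in> I \<longleftrightarrow> j + N \<in> I"
    using I(1) by (auto simp: conj_closed_def)
  have "card C = 2 * N - card I"
    unfolding C_def using closed(1) by (simp add: card_Diff_subset finite_subset[OF _ finite_lessThan])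
  then have "card C = card {a, b}"
    using I(2) ab(3,4) by simp
  moreover have "{a, b} \<subseteq> C"
    using ab by (simp add: C_def)
  ultimately have C: "C = {a, b}"
    using card_subset_eq[of C "{a, b}"] by (simp add: C_def)
  show ?thesis
  proof (cases "a < N")
    case True
    then have "a + N \<in> C"
      using closed(2)[OF True] ab(1) by (simp add: C_def)
    then have "b = a + N"
      using C True by auto
    then show ?thesis by (simp add: conj_pair_def)
  next
    case False
    then have "a - N \<in> C"
      using closed(2)[of "a - N"] ab(1,4) by (simp add: C_def)
    then have "b = a - N"
      using C False ab(4) by auto
    then show ?thesis
      using False by (simp add: conj_pair_def)
  qed
qed

lemma dform_fpow_diagonal_eq_fzero:
  assumes n: "2 \<le> n" and diag: "\<And>j k. j \<noteq> k \<Longrightarrow> h j k = 0"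
  shows "dform n (fpow (fundamental_form n h) (cdim n - 1)) = fzero"
proof -
  have vanish: "fpow (fundamental_form n h) (cdim n - 1) I * dmono n I K = 0" for I K
  proof (rule ccontr)
    assume "fpow (fundamental_form n h) (cdim n - 1) I * dmono n I K \<noteq> 0"
    then have pow: "fpow (fundamental_form n h) (cdim n - 1) I \<noteq> 0" and d: "dmono n I K \<noteq> 0"
      by auto
    have I: "conj_closed (cdim n) I" "card I = 2 * (cdim n - 1)"
      using fpow_nonzeroD[OF fundamental_form_diagonal_nonzeroD[OF diag] pow] by auto
    obtain t L where tL: "t \<in> I" "dgen n t L \<noteq> 0" "L \<inter> I \<subseteq> {t}"
      using d by (rule dmono_nonzeroD)
    then obtain a b where ab: "L = {a, b}" "a \<noteq> b" "a < 2 * cdim n" "b < 2 * cdim n"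
        "\<not> conj_pair (cdim n) a b" "t \<notin> L"
      using dgen_nonzeroD[OF n] unfolding nonconj_pair_avoiding_def by blast
    then have "a \<notin> I" "b \<notin> I"
      using tL(3) by auto
    then show False
      using conj_pair_outside_conj_closed[OF I] ab(2-5) by blast
  qed
  then show ?thesis
    unfolding dform_def fzero_def by (intro ext sum.neutral) blast
qed

lemma balanced_inv_metric_diagonal:
  assumes "2 \<le> n" "herm_pos_def (cdim n) h" "\<And>j k. j \<noteq> k \<Longrightarrow> h j k = 0"
  shows "balanced_inv_metric n h"
  using assms dform_fpow_diagonal_eq_fzero by (simp add: balanced_inv_metric_def)

definition unit_metric :: "nat \<Rightarrow> nat \<Rightarrow> complex" where
  "unit_metric j k = (if j = k then 1 else 0)"

lemma herm_pos_def_unit_metric: "herm_pos_def N unit_metric"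
  unfolding herm_pos_def_def
proof (intro conjI allI impI)
  fix j k
  show "unit_metric k j = cnj (unit_metric j k)"
    by (simp add: unit_metric_def)
next
  fix v :: "nat \<Rightarrow> complex"
  assume "\<exists>j<N. v j \<noteq> 0"
  then obtain j0 where j0: "j0 < N" "v j0 \<noteq> 0"
    by blast
  have "cnj (v j) * unit_metric j k * v k = (if k = j then v j * cnj (v j) else 0)" for j k
    by (simp add: unit_metric_def)
  then have "(\<Sum>j<N. \<Sum>k<N. cnj (v j) * unit_metric j k * v k) = (\<Sum>j<N. of_real ((cmod (v j))\<^sup>2))"
    by (simp only: complex_norm_square) simp
  then have "Re (\<Sum>j<N. \<Sum>k<N. cnj (v j) * unit_metric j k * v k) = (\<Sum>j<N. (cmod (v j))\<^sup>2)"
    by (simp only: Re_sum Re_complex_of_real)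
  also have "\<dots> > 0"
    by (rule sum_pos2[where i = j0]) (use j0 in auto)
  finally show "0 < Re (\<Sum>j<N. \<Sum>k<N. cnj (v j) * unit_metric j k * v k)" .
qed

theorem theorem3p3:
  fixes n :: nat
  assumes "2 \<le> n"
  shows "\<exists>h. balanced_inv_metric n h"
proof
  show "balanced_inv_metric n unit_metric"
    using assms herm_pos_def_unit_metric by (rule balanced_inv_metric_diagonal) (simp add: unit_metric_def)
qed

end
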